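(* Let $N$ be a finite set and $\underline{N}\colon\mathrm{Aff}/\mathbb{Z}\to(\mathrm{Sets})$ the associated constant sheaf. For every ring $B$ the maps $\underline{N}(B)\to\underline{N}(B[[t]])\to\underline{N}(B((t)))$ are bijective. Equivalently, if $B((t))\simeq C_1\times\cdots\times C_l$ (resp. $B[[t]]\simeq C_1\times\cdots\times C_l$) then $B\simeq B_1\times\cdots\times B_l$ with $C_j=B_j((t))$ (resp. $C_j=B_j[[t]]$).
   Context: $B((t))=B[[t]][t^{-1}]$. The constant sheaf $\underline{N}$ assigns to $\mathrm{Spec}\,C$ the set of locally constant functions $\mathrm{Spec}\,C\to N$. *)

theory Defs
  imports "HOL-Library.FuncSet" "HOL-Computational_Algebra.Formal_Power_Series"
    "HOL-Computational_Algebra.Formal_Laurent_Series"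
begin

definition prime_ideal :: "'a::comm_ring_1 set \<Rightarrow> bool" where
  "prime_ideal P \<longleftrightarrow> 0 \<in> P \<and> (\<forall>x\<in>P. \<forall>y\<in>P. x + y \<in> P)
     \<and> (\<forall>r. \<forall>x\<in>P. r * x \<in> P) \<and> 1 \<notin> P
     \<and> (\<forall>x y. x * y \<in> P \<longrightarrow> x \<in> P \<or> y \<in> P)"

definition Spec :: "'a::comm_ring_1 set set" where
  "Spec = {P. prime_ideal P}"

definition zariski_open :: "'a::comm_ring_1 set \<Rightarrow> 'a set set" where
  "zariski_open S = {P \<in> Spec. \<not> S \<subseteq> P}"

definition locally_constant_on_Spec :: "('a::comm_ring_1 set \<Rightarrow> 'n) \<Rightarrow> bool" where
  "locally_constant_on_Spec f \<longleftrightarrow>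
     (\<forall>P\<in>Spec. \<exists>S. P \<in> zariski_open S \<and> (\<forall>Q\<in>zariski_open S. f Q = f P))"

definition const_sheaf :: "'n set \<Rightarrow> ('a::comm_ring_1 set \<Rightarrow> 'n) set" where
  "const_sheaf N = {f \<in> extensional Spec. f \<in> Spec \<rightarrow> N \<and> locally_constant_on_Spec f}"

definition sheaf_map :: "('a::comm_ring_1 \<Rightarrow> 'c::comm_ring_1) \<Rightarrow>
     ('a set \<Rightarrow> 'n) \<Rightarrow> ('c set \<Rightarrow> 'n)" where
  "sheaf_map phi f = restrict (\<lambda>Q. f (phi -` Q)) Spec"

end

theory Submission
  imports Defs
begin

unbundle fps_syntax

text \<open>
  Let phi: A -> C be a ring map such that every prime of A is the contraction of a prime of C
  and every idempotent of C lies in the image of phi. A level set of a locally constant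
  function h on Spec C is the complement of V(e) for an idempotent e: choose x + y = 1 with
  x in every prime outside the level set and y in every prime inside it; then x y is
  nilpotent, say (x y)^k = 0, and e = a x^k for any a, b with 1 = a x^k + b y^k. Lifting e
  to A shows that h factors through Spec C -> Spec A with a locally constant factor, so
  pulling back along phi is a bijection on sections of the constant sheaf.

  Both B -> B[[t]] and B -> B((t)) are such maps. A prime P of B is the contraction of
  P((t)), which is prime by the argument of Gauss's lemma. An idempotent e of B((t)) is
  constant: by induction on the order of its polar part, for every ideal J with
  e^2 = e mod J((t)) all coefficients e_n, n \<noteq> 0, lie in J. The case B[[t]] -> B((t)) follows
  because B -> B[[t]] -> B((t)) is B -> B((t)).
\<close>

definition is_ideal :: "'a::comm_ring_1 set \<Rightarrow> bool" where
  "is_ideal I \<longleftrightarrow> 0 \<in> I \<and> (\<forall>x\<in>I. \<forall>y\<in>I. x + y \<in> I) \<and> (\<forall>r. \<forall>x\<in>I. r * x \<in> I)"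

lemma
  assumes "is_ideal I"
  shows ideal_zero: "0 \<in> I"
    and ideal_add: "x \<in> I \<Longrightarrow> y \<in> I \<Longrightarrow> x + y \<in> I"
    and ideal_mult_left: "x \<in> I \<Longrightarrow> r * x \<in> I"
    and ideal_mult_right: "x \<in> I \<Longrightarrow> x * r \<in> I"
    and ideal_diff: "x \<in> I \<Longrightarrow> y \<in> I \<Longrightarrow> x - y \<in> I"
  using assms unfolding is_ideal_def
  by (auto simp: mult.commute) (metis diff_conv_add_uminus mult_minus1)

lemma ideal_sum:
  assumes "is_ideal I" "\<And>i. i \<in> S \<Longrightarrow> f i \<in> I"
  shows "sum f S \<in> I"
  using assms(2)
  by (induction S rule: infinite_finite_induct)
    (simp_all add: ideal_zero[OF assms(1)] ideal_add[OF assms(1)])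

lemma ideal_Inter: "(\<And>I. I \<in> \<I> \<Longrightarrow> is_ideal I) \<Longrightarrow> is_ideal (\<Inter>\<I>)"
  unfolding is_ideal_def by blast

lemma ideal_principal: "is_ideal (range (\<lambda>r. r * (x::'a::comm_ring_1)))"
  unfolding is_ideal_def
proof (intro conjI ballI allI)
  show "0 \<in> range (\<lambda>r. r * x)" by (rule range_eqI[where x = 0]) simp
  show "u + v \<in> range (\<lambda>r. r * x)" if uv: "u \<in> range (\<lambda>r. r * x)" "v \<in> range (\<lambda>r. r * x)" for u v
  proof -
    obtain a b where "u = a * x" "v = b * x" using uv by blast
    then have "u + v = (a + b) * x" by (simp add: distrib_right)
    then show ?thesis by blast
  qed
  show "c * u \<in> range (\<lambda>r. r * x)" if u: "u \<in> range (\<lambda>r. r * x)" for c u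
  proof -
    obtain a where "u = a * x" using u by blast
    then have "c * u = (c * a) * x" by (simp add: mult.assoc)
    then show ?thesis by blast
  qed
qed

definition ideal_adjoin :: "'a::comm_ring_1 set \<Rightarrow> 'a \<Rightarrow> 'a set" where
  "ideal_adjoin I x = {i + r * x |i r. i \<in> I}"

lemma ideal_adjoin:
  assumes "is_ideal I"
  shows "is_ideal (ideal_adjoin I x)"
  unfolding is_ideal_def ideal_adjoin_def
proof (intro conjI ballI allI)
  have "0 = 0 + 0 * x" by simp
  then show "0 \<in> {i + r * x |i r. i \<in> I}"
    using ideal_zero[OF assms] by blast
next
  fix u v assume "u \<in> {i + r * x |i r. i \<in> I}" "v \<in> {i + r * x |i r. i \<in> I}"
  then obtain i r j s where "u = i + r * x" "v = j + s * x" "i \<in> I" "j \<in> I" by blast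
  then show "u + v \<in> {i + r * x |i r. i \<in> I}"
    by (intro CollectI exI[of _ "i + j"] exI[of _ "r + s"])
      (auto simp: algebra_simps intro: ideal_add[OF assms])
next
  fix c u assume "u \<in> {i + r * x |i r. i \<in> I}"
  then obtain i r where "u = i + r * x" "i \<in> I" by blast
  then show "c * u \<in> {i + r * x |i r. i \<in> I}"
    by (intro CollectI exI[of _ "c * i"] exI[of _ "c * r"])
      (auto simp: algebra_simps intro: ideal_mult_left[OF assms])
qed

lemma subset_ideal_adjoin: "I \<subseteq> ideal_adjoin I x"
proof
  fix i assume "i \<in> I"
  moreover have "i = i + 0 * x" by simp
  ultimately show "i \<in> ideal_adjoin I x" unfolding ideal_adjoin_def by blast
qed

lemma generator_in_ideal_adjoin:
  assumes "is_ideal I"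
  shows "x \<in> ideal_adjoin I x"
proof -
  have "x = 0 + 1 * x" by simp
  then show ?thesis unfolding ideal_adjoin_def using ideal_zero[OF assms] by blast
qed

lemma ideal_adjoin_mult:
  assumes I: "is_ideal I" and "x * x \<in> I" and "u \<in> ideal_adjoin I x" "v \<in> ideal_adjoin I x"
  shows "u * v \<in> I"
proof -
  obtain i r j s where "u = i + r * x" "v = j + s * x" "i \<in> I" "j \<in> I"
    using assms(3,4) unfolding ideal_adjoin_def by blast
  then have "u * v = i * v + (r * x) * j + (x * x) * (r * s)"
    by (simp add: algebra_simps)
  also have "\<dots> \<in> I"
    using ideal_mult_right[OF I \<open>i \<in> I\<close>] ideal_mult_left[OF I \<open>j \<in> I\<close>]
      ideal_mult_right[OF I \<open>x * x \<in> I\<close>]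
    by (intro ideal_add[OF I])
  finally show ?thesis .
qed

lemma ideal_plus_ideal:
  assumes "is_ideal I" "is_ideal J"
  shows "is_ideal {i + j |i j. i \<in> I \<and> j \<in> J}"
  unfolding is_ideal_def
proof (intro conjI ballI allI)
  have "0 = 0 + (0::'a)" by simp
  then show "0 \<in> {i + j |i j. i \<in> I \<and> j \<in> J}"
    using ideal_zero[OF assms(1)] ideal_zero[OF assms(2)] by blast
next
  fix u v assume "u \<in> {i + j |i j. i \<in> I \<and> j \<in> J}" "v \<in> {i + j |i j. i \<in> I \<and> j \<in> J}"
  then obtain i j i' j' where "u = i + j" "v = i' + j'" "i \<in> I" "i' \<in> I" "j \<in> J" "j' \<in> J"
    by blast
  then show "u + v \<in> {i + j |i j. i \<in> I \<and> j \<in> J}"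
    by (intro CollectI exI[of _ "i + i'"] exI[of _ "j + j'"])
      (auto simp: algebra_simps intro: ideal_add assms)
next
  fix c u assume "u \<in> {i + j |i j. i \<in> I \<and> j \<in> J}"
  then obtain i j where "u = i + j" "i \<in> I" "j \<in> J" by blast
  then show "c * u \<in> {i + j |i j. i \<in> I \<and> j \<in> J}"
    by (intro CollectI exI[of _ "c * i"] exI[of _ "c * j"])
      (auto simp: algebra_simps intro: ideal_mult_left assms)
qed

lemma prime_ideal_imp_ideal: "prime_ideal P \<Longrightarrow> is_ideal P"
  by (simp add: prime_ideal_def is_ideal_def)

lemma Spec_imp_ideal: "P \<in> Spec \<Longrightarrow> is_ideal P"
  by (simp add: Spec_def prime_ideal_imp_ideal)

lemma prime_ideal_one: "prime_ideal P \<Longrightarrow> 1 \<notin> P"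
  by (simp add: prime_ideal_def)

lemma prime_ideal_mult: "prime_ideal P \<Longrightarrow> x * y \<in> P \<Longrightarrow> x \<in> P \<or> y \<in> P"
  by (simp add: prime_ideal_def)

lemma prime_ideal_power: "prime_ideal P \<Longrightarrow> x ^ k \<in> P \<Longrightarrow> x \<in> P"
  by (induction k) (simp_all add: prime_ideal_def, blast)

lemma ideal_chain_Union:
  assumes "C \<noteq> {}" "\<And>K. K \<in> C \<Longrightarrow> is_ideal K"
    and chain: "\<And>K L. K \<in> C \<Longrightarrow> L \<in> C \<Longrightarrow> K \<subseteq> L \<or> L \<subseteq> K"
  shows "is_ideal (\<Union>C)"
  unfolding is_ideal_def
proof (intro conjI ballI allI)
  show "0 \<in> \<Union>C" using assms(1,2) ideal_zero by blast
next
  fix x y assume "x \<in> \<Union>C" "y \<in> \<Union>C"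
  then obtain K L where "K \<in> C" "L \<in> C" "x \<in> K" "y \<in> L" by blast
  with chain[OF \<open>K \<in> C\<close> \<open>L \<in> C\<close>] show "x + y \<in> \<Union>C"
    using assms(2) ideal_add by blast
next
  fix r x assume "x \<in> \<Union>C"
  then show "r * x \<in> \<Union>C" using assms(2) ideal_mult_left by blast
qed

lemma maximal_ideal_avoiding_exists:
  assumes "is_ideal I" "I \<inter> S = {}"
  obtains M where "is_ideal M" "I \<subseteq> M" "M \<inter> S = {}"
    "\<And>K. is_ideal K \<Longrightarrow> M \<subseteq> K \<Longrightarrow> K \<inter> S = {} \<Longrightarrow> K = M"
proof -
  define \<A> where "\<A> = {K. is_ideal K \<and> I \<subseteq> K \<and> K \<inter> S = {}}"
  have "\<exists>M\<in>\<A>. \<forall>K\<in>\<A>. M \<subseteq> K \<longrightarrow> K = M"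
  proof (rule subset_Zorn)
    fix C assume C: "subset.chain \<A> C"
    show "\<exists>U\<in>\<A>. \<forall>K\<in>C. K \<subseteq> U"
    proof (cases "C = {}")
      case True
      then show ?thesis using assms by (auto simp: \<A>_def)
    next
      case False
      have C\<A>: "C \<subseteq> \<A>" and chain: "\<And>K L. K \<in> C \<Longrightarrow> L \<in> C \<Longrightarrow> K \<subseteq> L \<or> L \<subseteq> K"
        using C by (auto simp: subset_chain_def)
      have "is_ideal (\<Union>C)"
        using C\<A> by (intro ideal_chain_Union[OF False _ chain]) (auto simp: \<A>_def)
      moreover have "I \<subseteq> \<Union>C" "\<Union>C \<inter> S = {}"
        using C\<A> False by (auto simp: \<A>_def)
      ultimately show ?thesis by (auto simp: \<A>_def)
    qed
  qed
  then obtain M where M: "M \<in> \<A>" and maximal: "\<And>K. K \<in> \<A> \<Longrightarrow> M \<subseteq> K \<Longrightarrow> K = M"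
    by blast
  show thesis
  proof (rule that)
    show "is_ideal M" "I \<subseteq> M" "M \<inter> S = {}" using M by (auto simp: \<A>_def)
    show "K = M" if "is_ideal K" "M \<subseteq> K" "K \<inter> S = {}" for K
      using that \<open>I \<subseteq> M\<close> by (intro maximal) (auto simp: \<A>_def)
  qed
qed

lemma maximal_ideal_avoiding_imp_prime:
  assumes M: "is_ideal M" "M \<inter> S = {}"
    and maximal: "\<And>K. is_ideal K \<Longrightarrow> M \<subseteq> K \<Longrightarrow> K \<inter> S = {} \<Longrightarrow> K = M"
    and S: "1 \<in> S" "\<And>x y. x \<in> S \<Longrightarrow> y \<in> S \<Longrightarrow> x * y \<in> S"
  shows "prime_ideal M"
proof -
  have meets: "\<exists>m\<in>M. \<exists>r. m + r * x \<in> S" if "x \<notin> M" for x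
  proof (rule ccontr)
    assume "\<not> ?thesis"
    then have "ideal_adjoin M x \<inter> S = {}" unfolding ideal_adjoin_def by blast
    then have "ideal_adjoin M x = M"
      using maximal ideal_adjoin[OF M(1)] subset_ideal_adjoin by blast
    then show False using generator_in_ideal_adjoin[OF M(1)] that by blast
  qed
  have "x \<in> M \<or> y \<in> M" if xy: "x * y \<in> M" for x y
  proof (rule ccontr)
    assume "\<not> (x \<in> M \<or> y \<in> M)"
    then obtain m r n s where mn: "m \<in> M" "n \<in> M" and S': "m + r * x \<in> S" "n + s * y \<in> S"
      using meets by meson
    have "(m + r * x) * (n + s * y) = m * (n + s * y) + r * x * n + (r * s) * (x * y)"
      by (simp add: algebra_simps)
    also have "\<dots> \<in> M"
      using mn xy ideal_add[OF M(1)] ideal_mult_left[OF M(1)] ideal_mult_right[OF M(1)] by metis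
    finally show False using S' S(2) M(2) by blast
  qed
  then show ?thesis
    using M S(1) unfolding prime_ideal_def is_ideal_def by blast
qed

lemma prime_ideal_avoiding:
  assumes "is_ideal I" "I \<inter> S = {}"
    and "1 \<in> S" "\<And>x y. x \<in> S \<Longrightarrow> y \<in> S \<Longrightarrow> x * y \<in> S"
  shows "\<exists>P. prime_ideal P \<and> I \<subseteq> P \<and> P \<inter> S = {}"
proof -
  obtain M where M: "is_ideal M" "I \<subseteq> M" "M \<inter> S = {}"
    and maximal: "\<And>K. is_ideal K \<Longrightarrow> M \<subseteq> K \<Longrightarrow> K \<inter> S = {} \<Longrightarrow> K = M"
    using maximal_ideal_avoiding_exists[OF assms(1,2)] by metis
  have "prime_ideal M"
    by (rule maximal_ideal_avoiding_imp_prime[OF M(1,3) maximal assms(3,4)])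
  with M show ?thesis by blast
qed

lemma prime_ideal_containing:
  assumes "is_ideal I" "1 \<notin> I"
  shows "\<exists>P. prime_ideal P \<and> I \<subseteq> P"
  using prime_ideal_avoiding[OF assms(1), of "{1}"] assms(2) by auto

lemma in_all_primes_imp_nilpotent:
  fixes x :: "'a::comm_ring_1"
  assumes "\<And>P. P \<in> Spec \<Longrightarrow> x \<in> P"
  shows "\<exists>k. x ^ k = 0"
proof (rule ccontr)
  assume "\<not> ?thesis"
  then have "{0} \<inter> range (power x) = {}" by auto
  moreover have "is_ideal {0::'a}" by (simp add: is_ideal_def)
  moreover have "1 \<in> range (power x)" by (metis power_0 rangeI)
  moreover have "x ^ i * x ^ j \<in> range (power x)" for i j
    by (metis power_add rangeI)
  ultimately obtain P where "prime_ideal P" "P \<inter> range (power x) = {}"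
    using prime_ideal_avoiding[of "{0}" "range (power x)"] by fast
  moreover have "x \<in> range (power x)" by (metis power_one_right rangeI)
  ultimately show False using assms by (auto simp: Spec_def)
qed

lemma comaximal_powers:
  fixes x y :: "'a::comm_ring_1"
  assumes "x + y = 1"
  obtains a b where "a * x ^ k + b * y ^ k = 1"
proof -
  define K where "K = ideal_adjoin (range (\<lambda>a. a * x ^ k)) (y ^ k)"
  have K: "is_ideal K" unfolding K_def by (rule ideal_adjoin[OF ideal_principal])
  have "1 \<in> K"
  proof (rule ccontr)
    assume "1 \<notin> K"
    then obtain P where P: "prime_ideal P" "K \<subseteq> P"
      using prime_ideal_containing[OF K] by blast
    have "x ^ k \<in> range (\<lambda>a. a * x ^ k)" by (rule range_eqI[where x = 1]) simp
    then have "x ^ k \<in> K" unfolding K_def by (rule subsetD[OF subset_ideal_adjoin])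
    have "y ^ k \<in> K" unfolding K_def by (rule generator_in_ideal_adjoin[OF ideal_principal])
    then have "x \<in> P" "y \<in> P"
      using \<open>x ^ k \<in> K\<close> P prime_ideal_power by blast+
    then have "1 \<in> P" using assms ideal_add[OF prime_ideal_imp_ideal[OF P(1)]] by metis
    then show False using prime_ideal_one[OF P(1)] by contradiction
  qed
  then obtain a b where "1 = a * x ^ k + b * y ^ k" unfolding K_def ideal_adjoin_def by blast
  then show thesis using that by simp
qed

lemma locally_constant_separating_pair:
  fixes g :: "'a::comm_ring_1 set \<Rightarrow> 'n"
  assumes lc: "locally_constant_on_Spec g"
  obtains x y where "x + y = 1"
    "\<And>P. P \<in> Spec \<Longrightarrow> g P \<noteq> v \<Longrightarrow> x \<in> P" "\<And>P. P \<in> Spec \<Longrightarrow> g P = v \<Longrightarrow> y \<in> P"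
proof -
  define I where "I = \<Inter>{P\<in>Spec. g P \<noteq> v}"
  define J where "J = \<Inter>{P\<in>Spec. g P = v}"
  define K where "K = {i + j |i j. i \<in> I \<and> j \<in> J}"
  have "is_ideal I" "is_ideal J"
    unfolding I_def J_def by (auto intro: ideal_Inter Spec_imp_ideal)
  have "1 \<in> K"
  proof (rule ccontr)
    assume "1 \<notin> K"
    then obtain P where P: "prime_ideal P" "K \<subseteq> P"
      using prime_ideal_containing ideal_plus_ideal[OF \<open>is_ideal I\<close> \<open>is_ideal J\<close>]
      unfolding K_def by blast
    have "I \<subseteq> K" "J \<subseteq> K"
      unfolding K_def using ideal_zero[OF \<open>is_ideal I\<close>] ideal_zero[OF \<open>is_ideal J\<close>]
      by (force intro: exI[of _ 0])+
    have "P \<in> Spec" using P(1) by (simp add: Spec_def)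
    then obtain S where S: "P \<in> zariski_open S" "\<And>Q. Q \<in> zariski_open S \<Longrightarrow> g Q = g P"
      using lc unfolding locally_constant_on_Spec_def by blast
    then obtain s where "s \<in> S" "s \<notin> P" by (auto simp: zariski_open_def)
    then have "s \<in> Q" if "Q \<in> Spec" "g Q \<noteq> g P" for Q
      using S(2)[of Q] that by (auto simp: zariski_open_def)
    then have "s \<in> I \<or> s \<in> J" unfolding I_def J_def by (cases "g P = v") auto
    then show False using \<open>s \<notin> P\<close> \<open>I \<subseteq> K\<close> \<open>J \<subseteq> K\<close> P(2) by blast
  qed
  then obtain x y where "1 = x + y" "x \<in> I" "y \<in> J" unfolding K_def by blast
  then show thesis using that[of x y] unfolding I_def J_def by auto
qed

lemma locally_constant_level_set_idempotent:
  fixes g :: "'a::comm_ring_1 set \<Rightarrow> 'n"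
  assumes "locally_constant_on_Spec g"
  obtains e where "e * e = e" "\<And>P. P \<in> Spec \<Longrightarrow> g P = v \<longleftrightarrow> e \<notin> P"
proof -
  obtain x y where xy: "x + y = 1"
    and x: "\<And>P. P \<in> Spec \<Longrightarrow> g P \<noteq> v \<Longrightarrow> x \<in> P"
    and y: "\<And>P. P \<in> Spec \<Longrightarrow> g P = v \<Longrightarrow> y \<in> P"
    using locally_constant_separating_pair[OF assms] by blast
  have "x * y \<in> P" if "P \<in> Spec" for P
    using that x y ideal_mult_left ideal_mult_right Spec_imp_ideal by metis
  then obtain k where "(x * y) ^ k = 0" using in_all_primes_imp_nilpotent by blast
  then have k: "(x * y) ^ Suc k = 0" by simp
  obtain a b where ab: "a * x ^ Suc k + b * y ^ Suc k = 1" using comaximal_powers[OF xy] .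
  define e where "e = a * x ^ Suc k"
  have e': "1 - e = b * y ^ Suc k" using ab unfolding e_def by (simp add: algebra_simps)
  have "e * (1 - e) = (a * b) * (x * y) ^ Suc k"
    unfolding e' by (simp only: e_def power_mult_distrib ac_simps)
  then have "e * e = e" using k by (simp add: algebra_simps)
  moreover have "g P = v \<longleftrightarrow> e \<notin> P" if P: "P \<in> Spec" for P
  proof -
    have I: "is_ideal P" using P by (rule Spec_imp_ideal)
    have "1 \<notin> P" using P prime_ideal_one by (simp add: Spec_def)
    have "1 - e \<in> P" if "g P = v"
      unfolding e' power_Suc using y[OF P that] ideal_mult_left[OF I] ideal_mult_right[OF I] by blast
    moreover have "e \<in> P" if "g P \<noteq> v"
      unfolding e_def power_Suc using x[OF P that] ideal_mult_left[OF I] ideal_mult_right[OF I] by blast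
    moreover have "\<not> (1 - e \<in> P \<and> e \<in> P)"
      using ideal_add[OF I, of "1 - e" e] \<open>1 \<notin> P\<close> by auto
    ultimately show ?thesis by blast
  qed
  ultimately show thesis using that by blast
qed

definition is_ring_hom :: "('a::comm_ring_1 \<Rightarrow> 'b::comm_ring_1) \<Rightarrow> bool" where
  "is_ring_hom \<phi> \<longleftrightarrow> \<phi> 1 = 1 \<and> (\<forall>x y. \<phi> (x + y) = \<phi> x + \<phi> y) \<and> (\<forall>x y. \<phi> (x * y) = \<phi> x * \<phi> y)"

lemma prime_ideal_vimage:
  assumes \<phi>: "is_ring_hom \<phi>" and Q: "prime_ideal Q"
  shows "prime_ideal (\<phi> -` Q)"
proof -
  have "\<phi> 0 = \<phi> 0 + \<phi> 0" using \<phi> unfolding is_ring_hom_def by (metis add_0)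
  then have "\<phi> 0 = 0" by simp
  moreover have "\<phi> 1 = 1" "\<phi> (x + y) = \<phi> x + \<phi> y" "\<phi> (x * y) = \<phi> x * \<phi> y" for x y
    using \<phi> by (simp_all add: is_ring_hom_def)
  ultimately show ?thesis
    using Q unfolding prime_ideal_def vimage_def by (intro conjI ballI allI impI CollectI) auto
qed

lemma Spec_vimage: "is_ring_hom \<phi> \<Longrightarrow> Q \<in> Spec \<Longrightarrow> \<phi> -` Q \<in> Spec"
  by (simp add: Spec_def prime_ideal_vimage)

lemma sheaf_map_comp:
  assumes "is_ring_hom \<phi>"
  shows "sheaf_map \<phi> (sheaf_map \<psi> g) = sheaf_map (\<phi> \<circ> \<psi>) g"
  using Spec_vimage[OF assms] by (auto simp: sheaf_map_def vimage_comp)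

lemma sheaf_map_in_const_sheaf:
  fixes \<phi> :: "'a::comm_ring_1 \<Rightarrow> 'b::comm_ring_1"
  assumes \<phi>: "is_ring_hom \<phi>" and g: "g \<in> const_sheaf N"
  shows "sheaf_map \<phi> g \<in> const_sheaf N"
proof -
  have "locally_constant_on_Spec (sheaf_map \<phi> g)"
    unfolding locally_constant_on_Spec_def
  proof
    fix Q :: "'b set" assume Q: "Q \<in> Spec"
    obtain S where S: "\<phi> -` Q \<in> zariski_open S" "\<And>P. P \<in> zariski_open S \<Longrightarrow> g P = g (\<phi> -` Q)"
      using g Spec_vimage[OF \<phi> Q] unfolding const_sheaf_def locally_constant_on_Spec_def by blast
    have open_vimage: "\<phi> -` Q' \<in> zariski_open S \<longleftrightarrow> Q' \<in> zariski_open (\<phi> ` S)"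
      if "Q' \<in> Spec" for Q'
      using that Spec_vimage[OF \<phi> that] by (auto simp: zariski_open_def)
    have "sheaf_map \<phi> g Q' = sheaf_map \<phi> g Q" if Q': "Q' \<in> zariski_open (\<phi> ` S)" for Q'
    proof -
      have "Q' \<in> Spec" using Q' by (simp add: zariski_open_def)
      then show ?thesis
        using Q S(2) open_vimage Q' by (simp add: sheaf_map_def)
    qed
    moreover have "Q \<in> zariski_open (\<phi> ` S)" using open_vimage[OF Q] S(1) by blast
    ultimately show "\<exists>S. Q \<in> zariski_open S \<and> (\<forall>Q'\<in>zariski_open S. sheaf_map \<phi> g Q' = sheaf_map \<phi> g Q)"
      by blast
  qed
  moreover have "sheaf_map \<phi> g \<in> Spec \<rightarrow> N"
    using g Spec_vimage[OF \<phi>] by (auto simp: const_sheaf_def sheaf_map_def)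
  ultimately show ?thesis by (simp add: const_sheaf_def sheaf_map_def)
qed

lemma locally_constant_level_set_lift:
  fixes \<phi> :: "'a::comm_ring_1 \<Rightarrow> 'b::comm_ring_1"
  assumes lift: "\<And>e. e * e = e \<Longrightarrow> e \<in> range \<phi>" and "locally_constant_on_Spec h"
  obtains b where "\<And>Q. Q \<in> Spec \<Longrightarrow> h Q = v \<longleftrightarrow> \<phi> b \<notin> Q"
proof -
  obtain e where "e * e = e" and e: "\<And>Q. Q \<in> Spec \<Longrightarrow> h Q = v \<longleftrightarrow> e \<notin> Q"
    using locally_constant_level_set_idempotent[OF assms(2)] by blast
  moreover obtain b where "e = \<phi> b" using lift[OF \<open>e * e = e\<close>] by blast
  ultimately show thesis using that by simp
qed

lemma locally_constant_factors_through_vimage: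
  fixes \<phi> :: "'a::comm_ring_1 \<Rightarrow> 'b::comm_ring_1"
  assumes lift: "\<And>e. e * e = e \<Longrightarrow> e \<in> range \<phi>" and h: "locally_constant_on_Spec h"
    and Q: "Q \<in> Spec" "Q' \<in> Spec" "\<phi> -` Q = \<phi> -` Q'"
  shows "h Q = h Q'"
proof -
  obtain b where b: "\<And>Q''. Q'' \<in> Spec \<Longrightarrow> h Q'' = h Q \<longleftrightarrow> \<phi> b \<notin> Q''"
    using locally_constant_level_set_lift[OF lift h] by blast
  have "b \<notin> \<phi> -` Q'" unfolding Q(3)[symmetric] using b[OF Q(1)] by simp
  then show ?thesis using b[OF Q(2)] by simp
qed

lemma inj_on_sheaf_map:
  fixes \<phi> :: "'a::comm_ring_1 \<Rightarrow> 'b::comm_ring_1"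
  assumes Spec_onto: "\<And>P. P \<in> Spec \<Longrightarrow> \<exists>Q\<in>Spec. \<phi> -` Q = P"
  shows "inj_on (sheaf_map \<phi>) (const_sheaf N)"
proof (rule inj_onI)
  fix g g' assume g: "g \<in> const_sheaf N" and g': "g' \<in> const_sheaf N"
    and eq: "sheaf_map \<phi> g = sheaf_map \<phi> g'"
  show "g = g'"
  proof (rule extensionalityI)
    show "g \<in> extensional Spec" "g' \<in> extensional Spec"
      using g g' by (simp_all add: const_sheaf_def)
  next
    fix P :: "'a set" assume "P \<in> Spec"
    then obtain Q where "Q \<in> Spec" "\<phi> -` Q = P" using Spec_onto by blast
    then show "g P = g' P" using fun_cong[OF eq, of Q] by (simp add: sheaf_map_def)
  qed
qed

lemma locally_constant_comp_Spec_section: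
  fixes \<phi> :: "'a::comm_ring_1 \<Rightarrow> 'b::comm_ring_1"
  assumes lift: "\<And>e. e * e = e \<Longrightarrow> e \<in> range \<phi>" and lc: "locally_constant_on_Spec h"
    and \<sigma>: "\<And>P. P \<in> Spec \<Longrightarrow> \<sigma> P \<in> Spec" "\<And>P. P \<in> Spec \<Longrightarrow> \<phi> -` \<sigma> P = P"
  shows "locally_constant_on_Spec (restrict (\<lambda>P. h (\<sigma> P)) Spec)"
  unfolding locally_constant_on_Spec_def
proof
  fix P :: "'a set" assume P: "P \<in> Spec"
  obtain b where b: "\<And>Q. Q \<in> Spec \<Longrightarrow> h Q = h (\<sigma> P) \<longleftrightarrow> \<phi> b \<notin> Q"
    using locally_constant_level_set_lift[OF lift lc] by blast
  have "h (\<sigma> P') = h (\<sigma> P) \<longleftrightarrow> b \<notin> P'" if P': "P' \<in> Spec" for P'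
  proof -
    have "b \<in> P' \<longleftrightarrow> b \<in> \<phi> -` \<sigma> P'" by (simp only: \<sigma>(2)[OF P'])
    then show ?thesis using b[OF \<sigma>(1)[OF P']] by simp
  qed
  then have "P \<in> zariski_open {b} \<and>
      (\<forall>P'\<in>zariski_open {b}. restrict (\<lambda>P. h (\<sigma> P)) Spec P' = restrict (\<lambda>P. h (\<sigma> P)) Spec P)"
    using P by (auto simp: zariski_open_def)
  then show "\<exists>S. P \<in> zariski_open S \<and>
      (\<forall>P'\<in>zariski_open S. restrict (\<lambda>P. h (\<sigma> P)) Spec P' = restrict (\<lambda>P. h (\<sigma> P)) Spec P)"
    by blast
qed

lemma sheaf_map_onto_const_sheaf:
  fixes \<phi> :: "'a::comm_ring_1 \<Rightarrow> 'b::comm_ring_1"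
  assumes \<phi>: "is_ring_hom \<phi>" and Spec_onto: "\<And>P. P \<in> Spec \<Longrightarrow> \<exists>Q\<in>Spec. \<phi> -` Q = P"
    and lift: "\<And>e. e * e = e \<Longrightarrow> e \<in> range \<phi>" and h: "h \<in> const_sheaf N"
  shows "h \<in> sheaf_map \<phi> ` const_sheaf N"
proof -
  have lc: "locally_constant_on_Spec h" using h by (simp add: const_sheaf_def)
  have "\<forall>P\<in>Spec. \<exists>Q. Q \<in> Spec \<and> \<phi> -` Q = P" using Spec_onto by blast
  then obtain \<sigma> where \<sigma>: "\<And>P. P \<in> Spec \<Longrightarrow> \<sigma> P \<in> Spec" "\<And>P. P \<in> Spec \<Longrightarrow> \<phi> -` \<sigma> P = P"
    using bchoice by metis
  define g where "g = restrict (\<lambda>P. h (\<sigma> P)) Spec"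
  have "locally_constant_on_Spec g"
    unfolding g_def by (rule locally_constant_comp_Spec_section[OF lift lc \<sigma>])
  moreover have "g \<in> Spec \<rightarrow> N"
    using h \<sigma>(1) unfolding g_def const_sheaf_def by auto
  ultimately have "g \<in> const_sheaf N" unfolding const_sheaf_def g_def by simp
  moreover have "h = sheaf_map \<phi> g"
  proof (rule extensionalityI)
    show "h \<in> extensional Spec" using h by (simp add: const_sheaf_def)
    show "sheaf_map \<phi> g \<in> extensional Spec" by (simp add: sheaf_map_def)
  next
    fix Q :: "'b set" assume Q: "Q \<in> Spec"
    then have P: "\<phi> -` Q \<in> Spec" by (rule Spec_vimage[OF \<phi>])
    have "h Q = h (\<sigma> (\<phi> -` Q))"
      by (rule locally_constant_factors_through_vimage[OF lift lc Q \<sigma>(1)[OF P] \<sigma>(2)[OF P, symmetric]])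
    then show "h Q = sheaf_map \<phi> g Q" using Q P by (simp add: sheaf_map_def g_def)
  qed
  ultimately show ?thesis by blast
qed

lemma bij_betw_sheaf_map:
  fixes \<phi> :: "'a::comm_ring_1 \<Rightarrow> 'b::comm_ring_1"
  assumes "is_ring_hom \<phi>" "\<And>P. P \<in> Spec \<Longrightarrow> \<exists>Q\<in>Spec. \<phi> -` Q = P"
    and "\<And>e. e * e = e \<Longrightarrow> e \<in> range \<phi>"
  shows "bij_betw (sheaf_map \<phi>) (const_sheaf N) (const_sheaf N)"
  unfolding bij_betw_def
  using inj_on_sheaf_map[OF assms(2)] sheaf_map_in_const_sheaf[OF assms(1)]
    sheaf_map_onto_const_sheaf[OF assms] by blast

definition fls_ideal :: "'a::comm_ring_1 set \<Rightarrow> 'a fls set" where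
  "fls_ideal J = {f. \<forall>n. f $$ n \<in> J}"

lemma fls_times_nth_modulo:
  fixes f g :: "'a::comm_ring_1 fls"
  assumes J: "is_ideal J" and "finite T"
    and outside: "\<And>i. i \<notin> T \<Longrightarrow> f $$ i * g $$ (n - i) \<in> J"
  shows "(f * g) $$ n - (\<Sum>i\<in>T. f $$ i * g $$ (n - i)) \<in> J"
proof -
  define h where "h i = f $$ i * g $$ (n - i)" for i
  define U where "U = {fls_subdegree f..n - fls_subdegree g} \<union> T"
  have "finite U" using \<open>finite T\<close> by (simp add: U_def)
  have "(f * g) $$ n = sum h {fls_subdegree f..n - fls_subdegree g}"
    unfolding h_def by (rule fls_times_nth(2))
  also have "\<dots> = sum h U"
    using \<open>finite U\<close> by (intro sum.mono_neutral_left) (auto simp: U_def h_def)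
  also have "\<dots> = sum h T + sum h (U - T)"
    using sum.subset_diff[of T U h] \<open>finite U\<close> by (simp add: U_def add.commute)
  finally have "(f * g) $$ n - sum h T = sum h (U - T)" by simp
  also have "\<dots> \<in> J"
    using outside by (intro ideal_sum[OF J]) (simp add: h_def)
  finally show ?thesis unfolding h_def .
qed

lemma fls_least_coeff_notin:
  fixes f :: "'a::comm_ring_1 fls"
  assumes "0 \<in> P" "f $$ k \<notin> P"
  obtains i0 where "f $$ i0 \<notin> P" "\<And>i. i < i0 \<Longrightarrow> f $$ i \<in> P"
proof -
  define S where "S = {i \<in> {fls_subdegree f..k}. f $$ i \<notin> P}"
  have "finite S" by (rule finite_subset[of _ "{fls_subdegree f..k}"]) (auto simp: S_def)
  have "f $$ k \<noteq> 0" using assms by auto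
  then have "k \<in> S" using assms(2) fls_subdegree_leI by (auto simp: S_def)
  then have "Min S \<in> S" using \<open>finite S\<close> by (intro Min_in) auto
  then have "f $$ Min S \<notin> P" unfolding S_def by blast
  moreover have "f $$ i \<in> P" if "i < Min S" for i
  proof (rule ccontr)
    assume "f $$ i \<notin> P"
    then have "fls_subdegree f \<le> i" using assms(1) by (metis fls_eq0_below_subdegree not_le)
    moreover have "i \<le> k" using that Min_le[OF \<open>finite S\<close> \<open>k \<in> S\<close>] by simp
    ultimately have "i \<in> S" using \<open>f $$ i \<notin> P\<close> by (simp add: S_def)
    then show False using that Min_le[OF \<open>finite S\<close>] by fastforce
  qed
  ultimately show thesis by (rule that)
qed

lemma prime_ideal_fls_ideal:
  assumes P: "prime_ideal P"
  shows "prime_ideal (fls_ideal P)"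
proof -
  have I: "is_ideal P" using P by (rule prime_ideal_imp_ideal)
  have "is_ideal (fls_ideal P)"
    unfolding is_ideal_def fls_ideal_def
  proof (intro conjI ballI allI CollectI)
    fix r x :: "'a fls" and n assume "x \<in> {f. \<forall>n. f $$ n \<in> P}"
    then have "(r * x) $$ n - 0 \<in> P"
      using fls_times_nth_modulo[OF I, of "{}" r x n] ideal_mult_left[OF I] by simp
    then show "(r * x) $$ n \<in> P" by simp
  qed (use ideal_zero[OF I] ideal_add[OF I] in auto)
  moreover have "1 \<notin> fls_ideal P"
    using prime_ideal_one[OF P] by (auto simp: fls_ideal_def intro: exI[of _ 0])
  moreover have "x \<in> fls_ideal P \<or> y \<in> fls_ideal P" if xy: "x * y \<in> fls_ideal P" for x y
  proof (rule ccontr)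
    assume "\<not> ?thesis"
    then obtain k l where "x $$ k \<notin> P" "y $$ l \<notin> P" by (auto simp: fls_ideal_def)
    then obtain i0 j0 where i0: "x $$ i0 \<notin> P" "\<And>i. i < i0 \<Longrightarrow> x $$ i \<in> P"
      and j0: "y $$ j0 \<notin> P" "\<And>j. j < j0 \<Longrightarrow> y $$ j \<in> P"
      using fls_least_coeff_notin ideal_zero[OF I] by metis
    have "(x * y) $$ (i0 + j0) - x $$ i0 * y $$ j0 \<in> P"
    proof -
      have "x $$ i * y $$ (i0 + j0 - i) \<in> P" if "i \<notin> {i0}" for i
        using that i0(2) j0(2) ideal_mult_left[OF I] ideal_mult_right[OF I]
        by (cases "i < i0") auto
      from fls_times_nth_modulo[OF I, of "{i0}", OF _ this] show ?thesis by simp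
    qed
    moreover have "(x * y) $$ (i0 + j0) \<in> P" using xy by (simp add: fls_ideal_def)
    ultimately have "x $$ i0 * y $$ j0 \<in> P" using ideal_diff[OF I] by fastforce
    then show False using prime_ideal_mult[OF P] i0(1) j0(1) by blast
  qed
  ultimately show ?thesis unfolding prime_ideal_def is_ideal_def by blast
qed

lemma fls_idempotent_mod_coeff_from_cross_terms:
  fixes e :: "'a::comm_ring_1 fls"
  assumes J: "is_ideal J" and "n \<noteq> 0" and idem: "e * e - e \<in> fls_ideal J"
    and cross: "\<And>i. i \<noteq> 0 \<Longrightarrow> i \<noteq> n \<Longrightarrow> e $$ i * e $$ (n - i) \<in> J"
    and cross0: "\<And>i. i \<noteq> 0 \<Longrightarrow> e $$ i * e $$ (- i) \<in> J"
  shows "e $$ n \<in> J"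
proof -
  have "(e * e) $$ n - (e $$ 0 * e $$ n + e $$ n * e $$ 0) \<in> J"
    using fls_times_nth_modulo[OF J, of "{0, n}" e e n] cross \<open>n \<noteq> 0\<close> by simp
  moreover have "(e * e) $$ n - e $$ n \<in> J" using idem by (simp add: fls_ideal_def)
  ultimately have A: "e $$ n - 2 * e $$ 0 * e $$ n \<in> J"
    using ideal_diff[OF J] by (fastforce simp: algebra_simps)
  have "(e * e) $$ 0 - e $$ 0 * e $$ 0 \<in> J"
    using fls_times_nth_modulo[OF J, of "{0}" e e 0] cross0 by simp
  moreover have "(e * e) $$ 0 - e $$ 0 \<in> J" using idem by (simp add: fls_ideal_def)
  ultimately have B: "e $$ 0 - e $$ 0 * e $$ 0 \<in> J"
    using ideal_diff[OF J] by fastforce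
  \<comment> \<open>since (1 - 2 e_0)^2 = 1 - 4 (e_0 - e_0^2)\<close>
  have "e $$ n = (e $$ n - 2 * e $$ 0 * e $$ n) * (1 - 2 * e $$ 0)
      + (e $$ 0 - e $$ 0 * e $$ 0) * (4 * e $$ n)"
    by (simp add: algebra_simps)
  also have "\<dots> \<in> J"
    using A B by (intro ideal_add[OF J] ideal_mult_right[OF J])
  finally show ?thesis .
qed

lemma fls_idempotent_mod_pos_coeffs:
  fixes e :: "'a::comm_ring_1 fls"
  assumes J: "is_ideal J" and idem: "e * e - e \<in> fls_ideal J"
    and neg: "\<And>i. i < 0 \<Longrightarrow> e $$ i \<in> J" and "n > 0"
  shows "e $$ n \<in> J"
proof -
  have "e $$ int k \<in> J" if "k > 0" for k :: nat
    using that
  proof (induction k rule: less_induct)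
    case (less k)
    show ?case
    proof (rule fls_idempotent_mod_coeff_from_cross_terms[OF J _ idem])
      show "int k \<noteq> 0" using less.prems by simp
      show "e $$ i * e $$ (int k - i) \<in> J" if "i \<noteq> 0" "i \<noteq> int k" for i
      proof (cases "0 < i \<and> i < int k")
        case True
        then have "e $$ int (nat i) \<in> J" by (intro less.IH) auto
        then show ?thesis using True ideal_mult_right[OF J] by simp
      next
        case False
        then have "i < 0 \<or> int k - i < 0" using that by auto
        then show ?thesis using neg ideal_mult_left[OF J] ideal_mult_right[OF J] by blast
      qed
      show "e $$ i * e $$ (- i) \<in> J" if "i \<noteq> 0" for i
      proof -
        have "i < 0 \<or> - i < 0" using that by auto
        then show ?thesis using neg ideal_mult_left[OF J] ideal_mult_right[OF J] by blast
      qed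
    qed
  qed
  then show ?thesis using \<open>n > 0\<close> by (metis zero_less_nat_eq int_nat_eq less_le)
qed

lemma fls_idempotent_mod_nonzero_coeffs:
  fixes e :: "'a::comm_ring_1 fls"
  assumes "is_ideal J" "e * e - e \<in> fls_ideal J"
    and "\<And>i. i < - int M \<Longrightarrow> e $$ i \<in> J" and "n \<noteq> 0"
  shows "e $$ n \<in> J"
  using assms
proof (induction M arbitrary: J n)
  case 0
  then show ?case
    using fls_idempotent_mod_pos_coeffs[of J e n] by (cases "n < 0") auto
next
  case (Suc M)
  note J = \<open>is_ideal J\<close> and idem = \<open>e * e - e \<in> fls_ideal J\<close>
  define c where "c = - int (Suc M)"
  define a where "a = e $$ c"
  have below: "e $$ i \<in> J" if "i < c" for i using Suc.prems(3) that by (simp add: c_def)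
  \<comment> \<open>Adjoin the lowest coefficient not yet known to lie in J; its square does lie in J.\<close>
  define J' where "J' = ideal_adjoin J a"
  have J': "is_ideal J'" "J \<subseteq> J'" "a \<in> J'"
    unfolding J'_def by (fact ideal_adjoin[OF J] subset_ideal_adjoin generator_in_ideal_adjoin[OF J])+
  have "e $$ m \<in> J'" if "m \<noteq> 0" for m
  proof (rule Suc.IH[OF J'(1) _ _ that])
    show "e * e - e \<in> fls_ideal J'" using idem J'(2) by (auto simp: fls_ideal_def)
    show "e $$ i \<in> J'" if "i < - int M" for i
      using that below[of i] J'(2,3) by (cases "i = c") (auto simp: a_def c_def)
  qed
  moreover have "a * a \<in> J"
  proof -
    have "e $$ i * e $$ (2 * c - i) \<in> J" if "i \<notin> {c}" for i
      using that below ideal_mult_left[OF J] ideal_mult_right[OF J]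
      by (cases "i < c") auto
    then have "(e * e) $$ (2 * c) - a * a \<in> J"
      using fls_times_nth_modulo[OF J, of "{c}" e e "2 * c"] by (simp add: a_def)
    moreover have "(e * e) $$ (2 * c) - e $$ (2 * c) \<in> J" using idem by (simp add: fls_ideal_def)
    moreover have "e $$ (2 * c) \<in> J" using below by (simp add: c_def)
    ultimately show ?thesis using ideal_add[OF J] ideal_diff[OF J] by fastforce
  qed
  ultimately have "e $$ i * e $$ j \<in> J" if "i \<noteq> 0" "j \<noteq> 0" for i j
    using that ideal_adjoin_mult[OF J] unfolding J'_def by blast
  then show ?case
    by (intro fls_idempotent_mod_coeff_from_cross_terms[OF J \<open>n \<noteq> 0\<close> idem]) auto
qed

lemma fls_idempotent_eq_const:
  fixes e :: "'a::comm_ring_1 fls"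
  assumes "e * e = e"
  shows "e = fls_const (e $$ 0)"
proof -
  have J: "is_ideal {0::'a}" by (simp add: is_ideal_def)
  have "e $$ i \<in> {0}" if "i < - int (nat (- fls_subdegree e))" for i
    using that by (simp split: if_splits)
  moreover have "e * e - e \<in> fls_ideal {0}" using assms by (simp add: fls_ideal_def)
  ultimately have "e $$ n \<in> {0}" if "n \<noteq> 0" for n
    using fls_idempotent_mod_nonzero_coeffs[OF J] that by blast
  then show ?thesis by (auto simp: fls_eq_iff)
qed

lemma fps_idempotent_eq_const:
  fixes e :: "'a::comm_ring_1 fps"
  assumes "e * e = e"
  shows "e = fps_const (e $ 0)"
proof -
  have "fps_to_fls e * fps_to_fls e = fps_to_fls e"
    using assms by (simp add: fls_times_fps_to_fls[symmetric])
  then have "fps_to_fls e = fls_const (e $ 0)" by (subst fls_idempotent_eq_const) simp_all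
  then show ?thesis by (metis fps_const_to_fls fps_to_fls_eq_iff)
qed

lemma fls_const_vimage_fls_ideal: "0 \<in> P \<Longrightarrow> fls_const -` fls_ideal P = P"
  by (auto simp: fls_ideal_def)

lemma is_ring_hom_fps_const: "is_ring_hom fps_const"
  by (simp add: is_ring_hom_def)

lemma is_ring_hom_fls_const: "is_ring_hom fls_const"
  by (simp add: is_ring_hom_def fls_plus_const)

lemma is_ring_hom_fps_to_fls: "is_ring_hom fps_to_fls"
  by (simp add: is_ring_hom_def fls_times_fps_to_fls)

lemma Spec_fls_const_vimage_onto:
  "P \<in> Spec \<Longrightarrow> \<exists>Q\<in>Spec. (fls_const :: 'a::comm_ring_1 \<Rightarrow> 'a fls) -` Q = P"
  using prime_ideal_fls_ideal fls_const_vimage_fls_ideal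
  by (metis Spec_def ideal_zero mem_Collect_eq prime_ideal_imp_ideal)

lemma fps_to_fls_comp_fps_const: "fps_to_fls \<circ> fps_const = fls_const"
  by (simp add: fun_eq_iff)

lemma Spec_fps_const_vimage_onto:
  assumes "P \<in> Spec"
  shows "\<exists>Q\<in>Spec. (fps_const :: 'a::comm_ring_1 \<Rightarrow> 'a fps) -` Q = P"
proof -
  obtain Q where "Q \<in> Spec" "fls_const -` Q = P"
    using Spec_fls_const_vimage_onto[OF assms] by blast
  then have "fps_to_fls -` Q \<in> Spec" "fps_const -` (fps_to_fls -` Q) = P"
    using Spec_vimage[OF is_ring_hom_fps_to_fls] by (simp_all add: vimage_comp fps_to_fls_comp_fps_const)
  then show ?thesis by blast
qed

theorem lemma2p5:
  fixes N :: "'n set"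
  assumes "finite N"
  shows "bij_betw (sheaf_map (fps_const :: 'b::comm_ring_1 \<Rightarrow> 'b fps))
           (const_sheaf N) (const_sheaf N)
       \<and> bij_betw (sheaf_map (fps_to_fls :: 'b fps \<Rightarrow> 'b fls))
           (const_sheaf N) (const_sheaf N)"
proof -
  have fps: "bij_betw (sheaf_map (fps_const :: 'b \<Rightarrow> 'b fps)) (const_sheaf N) (const_sheaf N)"
    using is_ring_hom_fps_const Spec_fps_const_vimage_onto fps_idempotent_eq_const
    by (intro bij_betw_sheaf_map) blast+
  have fls: "bij_betw (sheaf_map (fls_const :: 'b \<Rightarrow> 'b fls)) (const_sheaf N) (const_sheaf N)"
    using is_ring_hom_fls_const Spec_fls_const_vimage_onto fls_idempotent_eq_const
    by (intro bij_betw_sheaf_map) blast+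
  have "sheaf_map fps_to_fls \<circ> sheaf_map fps_const = sheaf_map (fls_const :: 'b \<Rightarrow> 'b fls)"
    by (rule ext) (simp add: sheaf_map_comp[OF is_ring_hom_fps_to_fls] fps_to_fls_comp_fps_const)
  then have "bij_betw (sheaf_map (fps_to_fls :: 'b fps \<Rightarrow> 'b fls)) (const_sheaf N) (const_sheaf N)"
    using bij_betw_comp_iff[OF fps] fls by metis
  with fps show ?thesis by blast
qed

end
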